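(* For all blueprints $\alpha,\beta,\beta'$: if $\alpha\Uparrow\beta$ and $\beta\sqsubseteq_1\beta'$, then there exists a blueprint $\alpha'$ such that $\alpha\sqsubseteq_1\alpha'$ and $\alpha'\Uparrow\beta'$.
   Context: Addresses are finite sequences of positive integers with prefix order $\le$ ($<$ strict), concatenation $\cdot$, empty address $\varepsilon$. A partial tree is a function on a set of addresses; $\pi|_a$ is $c\mapsto\pi(a\cdot c)$; $\pi[a\leftarrow\pi']$ is the partial tree $\pi''$ with $\pi''|_a=\pi'$ and $\pi''(b)=\pi(b)$ for $b\in\mathrm{dom}(\pi)$ with $a\not\le b$. $\mathfrak S$ consists of all formulas (arity 0) and symbols $@_\phi$ (arity 2). A blueprint is a finite partial tree with values in $\mathfrak S$ such that if $\alpha(a)=@_\phi$ then $\alpha|_{a\cdot(1)},\alpha|_{a\cdot(2)}$ are non-empty. Notation: $\emptyset_{\mathbb B}$ empty blueprint; $\phi$ denotes $\varepsilon\mapsto\phi$; $@_\phi(\alpha_1,\alpha_2)$ ($\alpha_i$ non-empty) has root $@_\phi$ and $\alpha_i$ at $(i)$; for pairwise incomparable $\bar a=(a_1,\dots,a_k)$, $*_{\bar a}(\alpha_1,\dots,\alpha_k)$ is the blueprint of minimal domain whose restriction at $a_i$ is $\alpha_i$. $\Uparrow$ is the least reflexive transitive relation with $\beta[a\leftarrow\beta|_b]\Uparrow\beta$ whenever $a,b\in\mathrm{dom}(\beta)$, $a<b$, $\beta(a)=\beta(b)$. $\equiv$ is the least relation with: $\emptyset_{\mathbb B}\equiv\emptyset_{\mathbb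 B}$; $\phi\equiv\phi$; $@_\phi(\alpha_1,\alpha_2)\equiv@_\phi(\beta_1,\beta_2)$ if $\alpha_i\equiv\beta_i$; $*_{\bar a}(\alpha_1,\dots,\alpha_n)\equiv*_{\bar b}(\beta_1,\dots,\beta_n)$ if $\alpha_i\equiv\beta_i$ for all $i$ (with $\bar a,\bar b$ pairwise-incomparable sequences of length $n$, not both $(\varepsilon)$, and some $\alpha_i,\beta_i$ non-empty). $\curvearrowleft_m$ is the least relation with: (1) if $\gamma_1\equiv\dots\equiv\gamma_{m+1}\not\equiv\emptyset_{\mathbb B}$ then $*_{\bar a}(\gamma_1,\dots,\gamma_m)\curvearrowleft_m*_{\bar a\cdot(b)}(\gamma_1,\dots,\gamma_{m+1})$; (2) if $\alpha=*_{\bar a}(\alpha_1,\dots,\alpha_n)$, $\beta=*_{\bar b}(\beta_1,\dots,\beta_p)$, $\alpha\curvearrowleft_m\beta$, $\gamma$ non-empty, then $@_\phi(\alpha,\gamma)\curvearrowleft_m@_\phi(\beta,\gamma)$, $@_\phi(\gamma,\alpha)\curvearrowleft_m@_\phi(\gamma,\beta)$, $*_{\bar a\cdot(c)}(\alpha_1,\dots,\alpha_n,\gamma)\curvearrowleft_m*_{\bar b\cdot(c)}(\beta_1,\dots,\beta_p,\gamma)$. $\sqsubseteq_m$ is the reflexive transitive closure of $\equiv\cup\curvearrowleft_m$. *)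

theory Defs
  imports Main "HOL-Library.Sublist"
begin

text \<open>Prefix order is Sublist.prefix, strict order strict_prefix,
  concatenation is list append, the empty address is the empty list.\<close>

type_synonym addr = "nat list"

definition is_addr :: "addr \<Rightarrow> bool" where
  "is_addr a = (\<forall>i\<in>set a. 0 < i)"

text \<open>Symbols: formulas (arity 0, type parameter 'f) and application symbols At phi (arity 2).\<close>
datatype 'f sym = Fm 'f | At 'f

type_synonym 'f ptree = "addr \<Rightarrow> 'f sym option"

definition restr :: "'f ptree \<Rightarrow> addr \<Rightarrow> 'f ptree" where
  "restr \<pi> a = (\<lambda>c. \<pi> (a @ c))"

definition graft :: "'f ptree \<Rightarrow> addr \<Rightarrow> 'f ptree \<Rightarrow> 'f ptree" where
  "graft \<pi> a \<pi>' = (\<lambda>b. if prefix a b then \<pi>' (drop (length a) b) else \<pi> b)"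

definition blueprint :: "'f ptree \<Rightarrow> bool" where
  "blueprint \<alpha> \<longleftrightarrow> finite (dom \<alpha>) \<and> (\<forall>a\<in>dom \<alpha>. is_addr a) \<and>
     (\<forall>a \<phi>. \<alpha> a = Some (At \<phi>) \<longrightarrow>
        restr \<alpha> (a @ [1]) \<noteq> Map.empty \<and> restr \<alpha> (a @ [2]) \<noteq> Map.empty)"

definition leaf :: "'f \<Rightarrow> 'f ptree" where
  "leaf \<phi> = [[] \<mapsto> Fm \<phi>]"

definition app :: "'f \<Rightarrow> 'f ptree \<Rightarrow> 'f ptree \<Rightarrow> 'f ptree" where
  "app \<phi> \<alpha>1 \<alpha>2 = (\<lambda>d. case d of [] \<Rightarrow> Some (At \<phi>)
       | (i # c) \<Rightarrow> (if i = 1 then \<alpha>1 c else if i = 2 then \<alpha>2 c else None))"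

definition pw_incomp :: "addr list \<Rightarrow> bool" where
  "pw_incomp as \<longleftrightarrow> (\<forall>i<length as. \<forall>j<length as. i \<noteq> j \<longrightarrow> \<not> prefix (as ! i) (as ! j))"

text \<open>*_as(als): minimal-domain partial tree whose restriction at as!i is als!i
  (well-behaved when as is pairwise incomparable and of the same length as als).\<close>
fun starz :: "(addr \<times> 'f ptree) list \<Rightarrow> 'f ptree" where
  "starz [] = Map.empty"
| "starz ((a, \<alpha>) # rest) = (\<lambda>d. if prefix a d then \<alpha> (drop (length a) d) else starz rest d)"

definition star :: "addr list \<Rightarrow> 'f ptree list \<Rightarrow> 'f ptree" where
  "star as als = starz (zip as als)"

inductive up :: "'f ptree \<Rightarrow> 'f ptree \<Rightarrow> bool" where
  up_refl: "blueprint \<beta> \<Longrightarrow> up \<beta> \<beta>"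
| up_step: "blueprint \<beta> \<Longrightarrow> a \<in> dom \<beta> \<Longrightarrow> b \<in> dom \<beta> \<Longrightarrow> strict_prefix a b \<Longrightarrow>
    \<beta> a = \<beta> b \<Longrightarrow> up (graft \<beta> a (restr \<beta> b)) \<beta>"
| up_trans: "up x y \<Longrightarrow> up y z \<Longrightarrow> up x z"

inductive eqv :: "'f ptree \<Rightarrow> 'f ptree \<Rightarrow> bool" where
  eqv_empty: "eqv Map.empty Map.empty"
| eqv_leaf: "eqv (leaf \<phi>) (leaf \<phi>)"
| eqv_app: "eqv \<alpha>1 \<beta>1 \<Longrightarrow> eqv \<alpha>2 \<beta>2 \<Longrightarrow> \<alpha>1 \<noteq> Map.empty \<Longrightarrow> \<alpha>2 \<noteq> Map.empty \<Longrightarrow>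
    \<beta>1 \<noteq> Map.empty \<Longrightarrow> \<beta>2 \<noteq> Map.empty \<Longrightarrow> eqv (app \<phi> \<alpha>1 \<alpha>2) (app \<phi> \<beta>1 \<beta>2)"
| eqv_star: "length as = n \<Longrightarrow> length bs = n \<Longrightarrow> length als = n \<Longrightarrow> length bes = n \<Longrightarrow>
    pw_incomp as \<Longrightarrow> pw_incomp bs \<Longrightarrow> (\<forall>a\<in>set as. is_addr a) \<Longrightarrow> (\<forall>b\<in>set bs. is_addr b) \<Longrightarrow>
    \<not> (as = [[]] \<and> bs = [[]]) \<Longrightarrow>
    (\<forall>i<n. eqv (als ! i) (bes ! i)) \<Longrightarrow>
    (\<exists>i<n. als ! i \<noteq> Map.empty \<and> bes ! i \<noteq> Map.empty) \<Longrightarrow>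
    eqv (star as als) (star bs bes)"

inductive curv :: "nat \<Rightarrow> 'f ptree \<Rightarrow> 'f ptree \<Rightarrow> bool" for m :: nat where
  curv_base: "length as = m \<Longrightarrow> length gs = Suc m \<Longrightarrow> (\<forall>g\<in>set gs. blueprint g) \<Longrightarrow>
    pw_incomp (as @ [b]) \<Longrightarrow> (\<forall>a\<in>set (as @ [b]). is_addr a) \<Longrightarrow>
    (\<forall>i<m. eqv (gs ! i) (gs ! Suc i)) \<Longrightarrow> \<not> eqv (gs ! m) Map.empty \<Longrightarrow>
    curv m (star as (take m gs)) (star (as @ [b]) gs)"
| curv_app1: "curv m \<alpha> \<beta> \<Longrightarrow> \<alpha> \<noteq> Map.empty \<Longrightarrow> \<beta> \<noteq> Map.empty \<Longrightarrow>
    blueprint \<gamma> \<Longrightarrow> \<gamma> \<noteq> Map.empty \<Longrightarrow> curv m (app \<phi> \<alpha> \<gamma>) (app \<phi> \<beta> \<gamma>)"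
| curv_app2: "curv m \<alpha> \<beta> \<Longrightarrow> \<alpha> \<noteq> Map.empty \<Longrightarrow> \<beta> \<noteq> Map.empty \<Longrightarrow>
    blueprint \<gamma> \<Longrightarrow> \<gamma> \<noteq> Map.empty \<Longrightarrow> curv m (app \<phi> \<gamma> \<alpha>) (app \<phi> \<gamma> \<beta>)"
| curv_star: "curv m (star as als) (star bs bes) \<Longrightarrow>
    length as = length als \<Longrightarrow> length bs = length bes \<Longrightarrow>
    (\<forall>x\<in>set als. blueprint x) \<Longrightarrow> (\<forall>x\<in>set bes. blueprint x) \<Longrightarrow>
    pw_incomp (as @ [c]) \<Longrightarrow> pw_incomp (bs @ [c]) \<Longrightarrow>
    (\<forall>a\<in>set (as @ [c]). is_addr a) \<Longrightarrow> (\<forall>b\<in>set (bs @ [c]). is_addr b) \<Longrightarrow>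
    blueprint \<gamma> \<Longrightarrow> \<gamma> \<noteq> Map.empty \<Longrightarrow>
    curv m (star (as @ [c]) (als @ [\<gamma>])) (star (bs @ [c]) (bes @ [\<gamma>]))"

definition sq :: "nat \<Rightarrow> 'f ptree \<Rightarrow> 'f ptree \<Rightarrow> bool" where
  "sq m = (\<lambda>x y. eqv x y \<or> curv m x y)\<^sup>*\<^sup>*"

end

theory Submission
  imports Defs
begin

(* The relation \<Uparrow> is generated by single contractions \<beta>[a \<leftarrow> \<beta>|\<^sub>b] with \<beta>(a) = \<beta>(b), so it
   suffices to commute one contraction with one step of \<equiv> or \<curvearrowleft>\<^sub>1.  Along \<beta> \<equiv> \<beta>' the two
   equal nodes a < b are transported to equal nodes of \<beta>', and contracting there gives a
   \<Uparrow>-predecessor of \<beta>' that is \<equiv> to the contracted \<beta>.  Along \<beta> \<curvearrowleft>\<^sub>1 \<beta>' a contraction inside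
   the copy \<gamma>\<^sub>1 that gets duplicated is transported along \<gamma>\<^sub>1 \<equiv> \<gamma>\<^sub>2 to the new copy in the same
   way; any other contraction commutes with the \<curvearrowleft>\<^sub>1 step or cuts it down to a subtree.
   This gives a strip lemma (one \<Uparrow> against one step, closed by at most one step), and
   induction along the \<sqsubseteq>\<^sub>1 chain finishes the proof. *)

(* Keeps the child index 1 in addresses like 1 # e from being rewritten to Suc 0. *)
declare One_nat_def [simp del]

definition contract :: "'f ptree \<Rightarrow> addr \<Rightarrow> addr \<Rightarrow> 'f ptree" where
  "contract \<pi> a b = graft \<pi> a (restr \<pi> b)"

definition contractible :: "'f ptree \<Rightarrow> addr \<Rightarrow> addr \<Rightarrow> bool" where
  "contractible \<pi> a b \<longleftrightarrow> a \<in> dom \<pi> \<and> strict_prefix a b \<and> \<pi> a = \<pi> b"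

definition sq_step :: "nat \<Rightarrow> 'f ptree \<Rightarrow> 'f ptree \<Rightarrow> bool" where
  "sq_step m \<alpha> \<beta> \<longleftrightarrow> eqv \<alpha> \<beta> \<or> curv m \<alpha> \<beta>"

lemma sq_eq_rtranclp: "sq m = (sq_step m)\<^sup>*\<^sup>*"
  by (simp add: sq_def sq_step_def[abs_def])

section \<open>Restriction, grafting and contraction\<close>

lemma restr_Nil [simp]: "restr \<pi> [] = \<pi>"
  by (simp add: restr_def)

lemma restr_restr [simp]: "restr (restr \<pi> a) b = restr \<pi> (a @ b)"
  by (simp add: restr_def)

lemma graft_Nil [simp]: "graft \<pi> [] \<pi>' = \<pi>'"
  by (simp add: graft_def)

lemma graft_at [simp]: "graft \<pi> a \<pi>' (a @ d) = \<pi>' d"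
  by (simp add: graft_def)

lemma graft_outside: "\<not> prefix a d \<Longrightarrow> graft \<pi> a \<pi>' d = \<pi> d"
  by (simp add: graft_def)

lemma restr_graft [simp]: "restr (graft \<pi> a \<pi>') (a @ e) = restr \<pi>' e"
  by (simp add: restr_def graft_def)

lemma restr_graft_self [simp]: "restr (graft \<pi> a \<pi>') a = \<pi>'"
  using restr_graft[of \<pi> a \<pi>' "[]"] by simp

lemma graft_graft [simp]: "graft (graft \<pi> a \<pi>\<^sub>1) a \<pi>\<^sub>2 = graft \<pi> a \<pi>\<^sub>2"
  by (rule ext) (simp add: graft_def)

lemma restr_graft_parallel: "a \<parallel> b \<Longrightarrow> restr (graft \<pi> a \<pi>') b = restr \<pi> b"
  by (rule ext) (metis restr_def graft_outside parallel_append append_Nil2 parallelD1)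

lemma graft_append: "graft \<pi> (c @ a) \<pi>' = graft \<pi> c (graft (restr \<pi> c) a \<pi>')"
  by (rule ext) (auto simp: graft_def restr_def prefix_def)

lemma contract_apply:
  "contract \<pi> a b d = (if prefix a d then \<pi> (b @ drop (length a) d) else \<pi> d)"
  by (simp add: contract_def graft_def restr_def)

lemma contract_at [simp]: "contract \<pi> a b (a @ d) = \<pi> (b @ d)"
  by (simp add: contract_apply)

lemma contract_Nil: "contract \<pi> [] b = restr \<pi> b"
  by (simp add: contract_def)

lemma contract_append: "contract \<pi> (c @ a) (c @ b) = graft \<pi> c (contract (restr \<pi> c) a b)"
  by (simp add: contract_def graft_append)

lemma graft_contract_parallel:
  assumes "c \<parallel> a" "c \<parallel> b"
  shows "graft (contract \<pi> a b) c \<gamma> = contract (graft \<pi> c \<gamma>) a b"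
proof
  fix d
  have "\<not> prefix c (b @ e)" for e
    using assms(2) parallel_append[of c b "[]" e] by (auto dest: parallelD1)
  moreover have "\<not> (prefix c d \<and> prefix a d)"
    using assms(1) prefix_same_cases by (blast dest: parallelD1 parallelD2)
  ultimately show "graft (contract \<pi> a b) c \<gamma> d = contract (graft \<pi> c \<gamma>) a b d"
    by (auto simp: graft_def contract_apply)
qed

lemma contractible_dom: "contractible \<pi> a b \<Longrightarrow> a \<in> dom \<pi> \<and> b \<in> dom \<pi>"
  by (auto simp: contractible_def)

lemma contract_nonempty: "contractible \<pi> a b \<Longrightarrow> contract \<pi> a b \<noteq> Map.empty"
  using contract_at[of \<pi> a b "[]"] by (auto simp: contractible_def dest: fun_cong[of _ _ a])

lemma contractible_append:
  "contractible \<pi> (c @ a) (c @ b) \<longleftrightarrow> contractible (restr \<pi> c) a b"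
  by (simp add: contractible_def restr_def domIff strict_prefix_def)

lemma contractible_appendE:
  assumes "contractible \<pi> (c @ a) b"
  obtains b' where "b = c @ b'" "contractible (restr \<pi> c) a b'"
  using assms contractible_append[of \<pi> c a]
  by (metis contractible_def prefix_def strict_prefix_def prefix_order.order_trans)

lemma pw_incomp_parallel:
  "pw_incomp as \<Longrightarrow> i < length as \<Longrightarrow> j < length as \<Longrightarrow> i \<noteq> j \<Longrightarrow> as ! i \<parallel> as ! j"
  unfolding pw_incomp_def parallel_def by blast

lemma pw_incomp_snoc: "pw_incomp (as @ [c]) \<longleftrightarrow> pw_incomp as \<and> (\<forall>e\<in>set as. e \<parallel> c)"
  unfolding pw_incomp_def parallel_def
  by (fastforce simp: nth_append less_Suc_eq in_set_conv_nth)

lemma parallel_prefix_trans: "c \<parallel> e \<Longrightarrow> prefix e d \<Longrightarrow> c \<parallel> d"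
  by (metis parallel_commute parallel_appendI append_Nil2 prefix_def)

lemma starz_append:
  "starz (l @ l') d = (if \<exists>(a, x)\<in>set l. prefix a d then starz l d else starz l' d)"
  by (induction l rule: starz.induct) auto

lemma starz_outside: "\<forall>(a, x)\<in>set l. \<not> prefix a d \<Longrightarrow> starz l d = None"
  by (induction l rule: starz.induct) auto

lemma star_outside: "\<forall>e\<in>set as. \<not> prefix e d \<Longrightarrow> star as als d = None"
  by (auto simp: star_def intro!: starz_outside dest: set_zip_leftD)

lemma star_at:
  assumes "pw_incomp as" "length als = length as" "i < length as"
  shows "star as als (as ! i @ d) = (als ! i) d"
proof -
  have earlier: "\<not> prefix a (as ! i @ d)" if ax: "(a, x) \<in> set (take i (zip as als))" for a x
  proof -
    obtain j where j: "j < i" "a = as ! j"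
      using ax assms(2,3) by (auto simp: take_zip set_zip)
    then have "as ! j \<parallel> as ! i" using assms by (intro pw_incomp_parallel) auto
    then show ?thesis using j(2) parallel_append[of a "as ! i" "[]" d] by (auto dest: parallelD1)
  qed
  have split: "zip as als = take i (zip as als) @ (as ! i, als ! i) # drop (Suc i) (zip as als)"
    using assms(2,3) by (metis id_take_nth_drop length_zip min.idem nth_zip)
  show ?thesis
    unfolding star_def by (subst split) (use earlier in \<open>auto simp: starz_append\<close>)
qed

definition rooted_in :: "addr list \<Rightarrow> 'f ptree \<Rightarrow> bool" where
  "rooted_in as \<pi> \<longleftrightarrow> (\<forall>d\<in>dom \<pi>. \<exists>e\<in>set as. prefix e d)"

lemma rooted_in_star: "rooted_in as (star as als)"
  unfolding rooted_in_def
proof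
  fix d assume "d \<in> dom (star as als)"
  then show "\<exists>e\<in>set as. prefix e d" using star_outside[of as d als] by (metis domIff)
qed

lemma rooted_in_parallel:
  "rooted_in as \<pi> \<Longrightarrow> pw_incomp (as @ [c]) \<Longrightarrow> \<forall>d\<in>dom \<pi>. c \<parallel> d"
  unfolding rooted_in_def pw_incomp_snoc by (metis parallel_commute parallel_prefix_trans)

lemma star_Some_at:
  assumes "pw_incomp as" "length als = length as" "star as als d = Some s"
  obtains i e where "i < length as" "d = as ! i @ e" "(als ! i) e = Some s"
proof -
  have "\<exists>e\<in>set as. prefix e d" using rooted_in_star[of as als] assms(3) by (auto simp: rooted_in_def)
  then obtain i e where "i < length as" "d = as ! i @ e" by (auto simp: in_set_conv_nth prefix_def)
  with assms that show thesis by (simp add: star_at)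
qed

lemma restr_star:
  assumes "pw_incomp as" "length als = length as" "i < length as"
  shows "restr (star as als) (as ! i @ e) = restr (als ! i) e"
  using star_at[OF assms] by (simp add: restr_def)

lemma star_nonempty:
  assumes "pw_incomp as" "length als = length as" "i < length as" "als ! i \<noteq> Map.empty"
  shows "star as als \<noteq> Map.empty"
proof
  assume "star as als = Map.empty"
  then have "als ! i = Map.empty" using star_at[OF assms(1-3)] by auto
  with assms(4) show False ..
qed

lemma star_update:
  assumes "pw_incomp as" "length als = length as" "i < length as"
  shows "graft (star as als) (as ! i) u = star as (als[i := u])"
proof
  fix d
  consider (inside) j e where "j < length as" "d = as ! j @ e" | (outside) "\<forall>e\<in>set as. \<not> prefix e d"
    by (metis in_set_conv_nth prefix_def)
  then show "graft (star as als) (as ! i) u d = star as (als[i := u]) d"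
  proof cases
    case inside
    show ?thesis
    proof (cases "j = i")
      case False
      then have "\<not> prefix (as ! i) d"
        using inside assms pw_incomp_parallel[OF assms(1) assms(3) inside(1)]
        by (metis parallel_append append_Nil2 parallelD1)
      then show ?thesis using inside False assms by (simp add: graft_outside star_at)
    qed (use inside assms in \<open>simp add: star_at\<close>)
  next
    case outside
    then show ?thesis using assms(3) by (simp add: graft_outside star_outside)
  qed
qed

lemma star_snoc:
  assumes "pw_incomp (as @ [c])" "length als = length as"
  shows "star (as @ [c]) (als @ [\<gamma>]) = graft (star as als) c \<gamma>"
proof
  fix d
  have "\<not> (prefix c d \<and> prefix e d)" if "e \<in> set as" for e
    using that assms(1) prefix_same_cases by (fastforce simp: pw_incomp_snoc parallel_def)
  then show "star (as @ [c]) (als @ [\<gamma>]) d = graft (star as als) c \<gamma> d"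
    using assms(2)
    by (auto simp: star_def starz_append graft_def intro!: starz_outside[symmetric] dest: set_zip_leftD)
qed

lemma star_restr_eq:
  assumes "rooted_in as u"
  shows "star as (map (restr u) as) = u"
proof
  fix d
  have "starz (zip bs (map (restr u) bs)) d = (if \<exists>e\<in>set bs. prefix e d then u d else None)"
    for bs by (induction bs) (auto simp: restr_def prefix_def append_eq_conv_conj)
  then show "star as (map (restr u) as) d = u d"
    using assms by (cases "u d") (auto simp: star_def rooted_in_def)
qed

lemma app_Nil [simp]: "app \<phi> u v [] = Some (At \<phi>)"
  by (simp add: app_def)

lemma app_Cons [simp]:
  "app \<phi> u v (i # c) = (if i = 1 then u c else if i = 2 then v c else None)"
  by (simp add: app_def)

lemma app_nonempty [simp]: "app \<phi> u v \<noteq> Map.empty"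
  by (metis app_Nil option.distinct(1))

lemma restr_app_1 [simp]: "restr (app \<phi> u v) (1 # e) = restr u e"
  by (simp add: restr_def)

lemma restr_app_2 [simp]: "restr (app \<phi> u v) (2 # e) = restr v e"
  by (simp add: restr_def)

lemma app_SomeE:
  assumes "app \<phi> u v d = Some s"
  obtains "d = []" "s = At \<phi>"
  | e where "d = 1 # e" "u e = Some s"
  | e where "d = 2 # e" "v e = Some s"
  using assms by (cases d) (auto split: if_splits)

lemma graft_app_1: "graft (app \<phi> u v) [1] w = app \<phi> w v"
  by (rule ext) (auto simp: graft_def app_def split: list.split)

lemma graft_app_2: "graft (app \<phi> u v) [2] w = app \<phi> u w"
  by (rule ext) (auto simp: graft_def app_def split: list.split)

lemma contract_app_1: "contract (app \<phi> u v) (1 # a) (1 # b) = app \<phi> (contract u a b) v"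
  using contract_append[of "app \<phi> u v" "[1]" a b] by (simp add: graft_app_1)

lemma contract_app_2: "contract (app \<phi> u v) (2 # a) (2 # b) = app \<phi> u (contract v a b)"
  using contract_append[of "app \<phi> u v" "[2]" a b] by (simp add: graft_app_2)

lemma blueprintI:
  assumes "finite (dom \<pi>)" "\<And>d. d \<in> dom \<pi> \<Longrightarrow> is_addr d"
    "\<And>d \<phi> (k :: nat). \<pi> d = Some (At \<phi>) \<Longrightarrow> k \<in> {1, 2} \<Longrightarrow> restr \<pi> (d @ [k]) \<noteq> Map.empty"
  shows "blueprint \<pi>"
  unfolding blueprint_def using assms by blast

lemma blueprint_addr: "blueprint \<pi> \<Longrightarrow> \<pi> d = Some s \<Longrightarrow> is_addr d"
  unfolding blueprint_def by blast

lemma blueprint_At: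
  "blueprint \<pi> \<Longrightarrow> \<pi> d = Some (At \<phi>) \<Longrightarrow> (k :: nat) \<in> {1, 2} \<Longrightarrow> restr \<pi> (d @ [k]) \<noteq> Map.empty"
  unfolding blueprint_def by blast

lemma is_addr_append [simp]: "is_addr (a @ b) \<longleftrightarrow> is_addr a \<and> is_addr b"
  by (auto simp: is_addr_def)

lemma is_addr_Cons [simp]: "is_addr (i # a) \<longleftrightarrow> 0 < i \<and> is_addr a"
  by (simp add: is_addr_def)

lemma is_addr_Nil [simp]: "is_addr []"
  by (simp add: is_addr_def)

lemma blueprint_empty [simp]: "blueprint Map.empty"
  by (simp add: blueprint_def)

lemma blueprint_leaf [simp]: "blueprint (leaf \<phi>)"
  by (simp add: blueprint_def leaf_def)

lemma blueprint_restr: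
  assumes "blueprint \<pi>"
  shows "blueprint (restr \<pi> a)"
proof (rule blueprintI)
  have "dom (restr \<pi> a) = (\<lambda>c. a @ c) -` dom \<pi>" by (auto simp: restr_def)
  then show "finite (dom (restr \<pi> a))"
    using assms by (simp add: blueprint_def finite_vimageI inj_on_def)
qed (use assms in \<open>auto simp: restr_def dest: blueprint_addr blueprint_At\<close>)

lemma blueprint_app:
  assumes "blueprint u" "blueprint v" "u \<noteq> Map.empty" "v \<noteq> Map.empty"
  shows "blueprint (app \<phi> u v)"
proof (rule blueprintI)
  have "dom (app \<phi> u v) \<subseteq> insert [] (Cons 1 ` dom u \<union> Cons 2 ` dom v)"
  proof
    fix d assume "d \<in> dom (app \<phi> u v)"
    then obtain s where "app \<phi> u v d = Some s" by blast
    then show "d \<in> insert [] (Cons 1 ` dom u \<union> Cons 2 ` dom v)" by (cases rule: app_SomeE) auto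
  qed
  then show "finite (dom (app \<phi> u v))"
    using assms(1,2) finite_subset by (fastforce simp: blueprint_def)
next
  fix d assume "d \<in> dom (app \<phi> u v)"
  then show "is_addr d" using assms(1,2) by (auto elim!: app_SomeE dest: blueprint_addr)
next
  fix d \<psi> and k :: nat assume "app \<phi> u v d = Some (At \<psi>)" "k \<in> {1, 2}"
  then show "restr (app \<phi> u v) (d @ [k]) \<noteq> Map.empty"
    using assms by (cases d) (auto split: if_splits dest: blueprint_At)
qed

lemma blueprint_star:
  assumes "pw_incomp as" "\<forall>a\<in>set as. is_addr a" "length als = length as" "\<forall>x\<in>set als. blueprint x"
  shows "blueprint (star as als)"
proof (rule blueprintI)
  have "dom (star as als) \<subseteq> (\<Union>i<length as. (\<lambda>e. as ! i @ e) ` dom (als ! i))"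
    by (auto elim!: star_Some_at[OF assms(1,3)])
  moreover have "finite (dom (als ! i))" if "i < length as" for i
    using that assms(3,4) by (simp add: blueprint_def)
  ultimately show "finite (dom (star as als))"
    by (meson finite_UN_I finite_imageI finite_lessThan finite_subset lessThan_iff)
next
  fix d assume "d \<in> dom (star as als)"
  then show "is_addr d"
    using assms by (auto elim!: star_Some_at[OF assms(1,3)]) (metis blueprint_addr nth_mem)
next
  fix d \<psi> and k :: nat assume d: "star as als d = Some (At \<psi>)" and k: "k \<in> {1, 2}"
  obtain i e where i: "i < length as" "d = as ! i @ e" "(als ! i) e = Some (At \<psi>)"
    using star_Some_at[OF assms(1,3) d] .
  moreover have "blueprint (als ! i)" using assms(3,4) i(1) by simp
  ultimately show "restr (star as als) (d @ [k]) \<noteq> Map.empty"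
    using k by (simp add: restr_star[OF assms(1,3)] blueprint_At)
qed

lemma restr_graft_nonempty:
  assumes "restr \<pi> (d @ [k]) \<noteq> Map.empty" "\<not> prefix a d" "\<pi>' \<noteq> Map.empty"
  shows "restr (graft \<pi> a \<pi>') (d @ [k]) \<noteq> Map.empty"
proof (cases "prefix (d @ [k]) a")
  case True
  then obtain y where y: "a = d @ [k] @ y" by (auto simp: prefix_def)
  obtain z where "\<pi>' z \<noteq> None" using assms(3) by fastforce
  then have "restr (graft \<pi> a \<pi>') (d @ [k]) (y @ z) \<noteq> None"
    using graft_at[of \<pi> a \<pi>' z] y by (simp add: restr_def)
  then show ?thesis by auto
next
  case False
  obtain x where x: "\<pi> (d @ [k] @ x) \<noteq> None" using assms(1) by (fastforce simp: restr_def)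
  have "\<not> prefix a (d @ [k] @ x)"
    using False assms(2) prefix_same_cases[of a "d @ [k] @ x" "d @ [k]"] by auto
  then have "restr (graft \<pi> a \<pi>') (d @ [k]) x \<noteq> None"
    using x by (simp add: restr_def graft_outside)
  then show ?thesis by auto
qed

lemma blueprint_graft:
  assumes "blueprint \<pi>" "blueprint \<pi>'" "is_addr a" "\<pi>' \<noteq> Map.empty"
  shows "blueprint (graft \<pi> a \<pi>')"
proof (rule blueprintI)
  have "dom (graft \<pi> a \<pi>') \<subseteq> dom \<pi> \<union> (\<lambda>e. a @ e) ` dom \<pi>'"
  proof
    fix d assume "d \<in> dom (graft \<pi> a \<pi>')"
    then show "d \<in> dom \<pi> \<union> (\<lambda>e. a @ e) ` dom \<pi>'"
      by (cases "prefix a d") (auto simp: graft_def prefix_def)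
  qed
  then show "finite (dom (graft \<pi> a \<pi>'))"
    using assms(1,2) finite_subset by (fastforce simp: blueprint_def)
next
  fix d assume "d \<in> dom (graft \<pi> a \<pi>')"
  then obtain s where s: "graft \<pi> a \<pi>' d = Some s" by blast
  show "is_addr d"
  proof (cases "prefix a d")
    case True
    then obtain e where "d = a @ e" by (auto simp: prefix_def)
    with s assms show ?thesis by (auto dest: blueprint_addr)
  qed (use s assms in \<open>auto simp: graft_outside dest: blueprint_addr\<close>)
next
  fix d \<psi> and k :: nat assume d: "graft \<pi> a \<pi>' d = Some (At \<psi>)" and k: "k \<in> {1, 2}"
  show "restr (graft \<pi> a \<pi>') (d @ [k]) \<noteq> Map.empty"
  proof (cases "prefix a d")
    case True
    then obtain e where "d = a @ e" by (auto simp: prefix_def)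
    then show ?thesis using d k assms(2) by (auto dest: blueprint_At)
  next
    case False
    then have "\<pi> d = Some (At \<psi>)" using d by (simp add: graft_outside)
    with False show ?thesis using assms(1,4) k by (simp add: blueprint_At restr_graft_nonempty)
  qed
qed

lemma blueprint_contract:
  assumes "blueprint \<pi>" "contractible \<pi> a b"
  shows "blueprint (contract \<pi> a b)"
proof -
  have "is_addr a" "\<pi> b \<noteq> None"
    using assms by (auto simp: contractible_def dest: blueprint_addr)
  then have "restr \<pi> b \<noteq> Map.empty" by (metis restr_Nil restr_def append_Nil2)
  with \<open>is_addr a\<close> show ?thesis
    unfolding contract_def using assms(1) by (simp add: blueprint_graft blueprint_restr)
qed

lemma up_contract: "blueprint \<beta> \<Longrightarrow> contractible \<beta> a b \<Longrightarrow> up (contract \<beta> a b) \<beta>"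
  unfolding contract_def contractible_def by (rule up_step) auto

lemma up_blueprints: "up \<alpha> \<beta> \<Longrightarrow> blueprint \<alpha> \<and> blueprint \<beta>"
  by (induction rule: up.induct) (auto simp: blueprint_contract contractible_def contract_def[symmetric])

lemma up_nonempty: "up \<alpha> \<beta> \<Longrightarrow> \<beta> \<noteq> Map.empty \<Longrightarrow> \<alpha> \<noteq> Map.empty"
  by (induction rule: up.induct) (auto simp: contract_nonempty contractible_def contract_def[symmetric])

lemma up_dom: "up \<alpha> \<beta> \<Longrightarrow> d \<in> dom \<alpha> \<Longrightarrow> \<exists>e\<in>dom \<beta>. prefix e d"
proof (induction arbitrary: d rule: up.induct)
  case (up_step \<beta> a b)
  then show ?case by (cases "prefix a d") (auto simp: graft_def)
next
  case (up_trans x y z)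
  then show ?case by (meson prefix_order.order_trans)
qed auto

lemma up_context:
  fixes F :: "'f ptree \<Rightarrow> 'f ptree" and s :: "addr \<Rightarrow> addr"
  assumes "up \<alpha> \<beta>" "Q \<beta>"
    and Q_closed: "\<And>u v. up u v \<Longrightarrow> Q v \<Longrightarrow> Q u"
    and F_blueprint: "\<And>u. blueprint u \<Longrightarrow> Q u \<Longrightarrow> blueprint (F u)"
    and F_contract: "\<And>u a b. blueprint u \<Longrightarrow> Q u \<Longrightarrow> contractible u a b \<Longrightarrow>
      contractible (F u) (s a) (s b) \<and> F (contract u a b) = contract (F u) (s a) (s b)"
  shows "up (F \<alpha>) (F \<beta>)"
  using assms(1,2)
proof (induction rule: up.induct)
  case (up_refl \<beta>)
  then show ?case using F_blueprint by (blast intro: up.up_refl)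
next
  case (up_step \<beta> a b)
  then have "contractible \<beta> a b" by (simp add: contractible_def)
  with up_step show ?case
    using F_contract F_blueprint up_contract by (metis contract_def)
next
  case (up_trans x y z)
  then show ?case using Q_closed by (blast intro: up.up_trans)
qed

lemma up_graft_inside:
  assumes "up u v" "v \<noteq> Map.empty" "blueprint \<pi>" "is_addr c"
  shows "up (graft \<pi> c u) (graft \<pi> c v)"
  using assms(1,2)
proof (rule up_context[where s = "\<lambda>a. c @ a"])
  show "up u v \<Longrightarrow> v \<noteq> Map.empty \<Longrightarrow> u \<noteq> Map.empty" for u v :: "'f ptree"
    by (rule up_nonempty)
  show "blueprint (graft \<pi> c u)" if "blueprint u" "u \<noteq> Map.empty" for u
    using that assms(3,4) by (simp add: blueprint_graft)
  show "contractible (graft \<pi> c u) (c @ a) (c @ b) \<and>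
      graft \<pi> c (contract u a b) = contract (graft \<pi> c u) (c @ a) (c @ b)"
    if "contractible u a b" for u a b
    using that by (simp add: contractible_append contract_append)
qed

lemma up_graft_parallel:
  assumes "up u v" "\<forall>d\<in>dom v. c \<parallel> d" "is_addr c" "blueprint \<gamma>" "\<gamma> \<noteq> Map.empty"
  shows "up (graft u c \<gamma>) (graft v c \<gamma>)"
  using assms(1,2)
proof (rule up_context[where s = id])
  show "\<forall>d\<in>dom u. c \<parallel> d" if "up u v" "\<forall>d\<in>dom v. c \<parallel> d" for u v :: "'f ptree"
    using that up_dom parallel_prefix_trans by metis
  show "blueprint (graft u c \<gamma>)" if "blueprint u" for u
    using that assms(3-5) by (simp add: blueprint_graft)
  show "contractible (graft u c \<gamma>) (id a) (id b) \<and>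
      graft (contract u a b) c \<gamma> = contract (graft u c \<gamma>) (id a) (id b)"
    if "\<forall>d\<in>dom u. c \<parallel> d" "contractible u a b" for u a b
  proof -
    have "c \<parallel> a" "c \<parallel> b" using that by (auto simp: contractible_def)
    then show ?thesis
      using that(2)
      by (auto simp: contractible_def domIff graft_outside graft_contract_parallel parallelD1)
  qed
qed

lemma up_app_1:
  assumes "up u v" "v \<noteq> Map.empty" "blueprint \<gamma>" "\<gamma> \<noteq> Map.empty"
  shows "up (app \<phi> u \<gamma>) (app \<phi> v \<gamma>)"
  using up_graft_inside[OF assms(1,2) blueprint_app[OF assms(3,3,4,4)], of "[1]" \<phi>]
  by (simp add: graft_app_1)

lemma up_app_2:
  assumes "up u v" "v \<noteq> Map.empty" "blueprint \<gamma>" "\<gamma> \<noteq> Map.empty"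
  shows "up (app \<phi> \<gamma> u) (app \<phi> \<gamma> v)"
  using up_graft_inside[OF assms(1,2) blueprint_app[OF assms(3,3,4,4)], of "[2]" \<phi>]
  by (simp add: graft_app_2)

lemma up_star_update:
  assumes "pw_incomp as" "\<forall>a\<in>set as. is_addr a" "length als = length as"
    "\<forall>x\<in>set als. blueprint x" "i < length as" "up u v" "v \<noteq> Map.empty"
  shows "up (star as (als[i := u])) (star as (als[i := v]))"
  using up_graft_inside[OF assms(6,7) blueprint_star[OF assms(1-4)], of "as ! i"] assms
  by (simp add: star_update)

lemma up_restr_app_1:
  assumes "blueprint (app \<phi> u v)" "u e = Some (At \<phi>)"
  shows "up (restr u e) (app \<phi> u v)"
  using up_contract[OF assms(1), of "[]" "1 # e"] assms(2)
  by (simp add: contractible_def contract_Nil domIff)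

lemma up_restr_app_2:
  assumes "blueprint (app \<phi> u v)" "v e = Some (At \<phi>)"
  shows "up (restr v e) (app \<phi> u v)"
  using up_contract[OF assms(1), of "[]" "2 # e"] assms(2)
  by (simp add: contractible_def contract_Nil domIff)

lemma eqv_blueprints: "eqv \<alpha> \<beta> \<Longrightarrow> blueprint \<alpha> \<and> blueprint \<beta>"
proof (induction rule: eqv.induct)
  case (eqv_star as n bs als bes)
  then have "\<forall>x\<in>set als. blueprint x" "\<forall>x\<in>set bes. blueprint x"
    by (auto simp: in_set_conv_nth)
  with eqv_star show ?case by (auto intro!: blueprint_star)
qed (auto simp: blueprint_app)

lemma eqv_empty_iff: "eqv \<alpha> \<beta> \<Longrightarrow> \<alpha> = Map.empty \<longleftrightarrow> \<beta> = Map.empty"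
proof (induction rule: eqv.induct)
  case (eqv_leaf \<phi>)
  then show ?case by (auto simp: leaf_def dest: fun_cong[of _ _ "[]"])
next
  case (eqv_star as n bs als bes)
  then obtain i where "i < n" "als ! i \<noteq> Map.empty" "bes ! i \<noteq> Map.empty" by blast
  with eqv_star.hyps show ?case by (metis star_nonempty)
qed auto

lemma eqv_restr_match:
  "eqv \<alpha> \<beta> \<Longrightarrow> \<alpha> d = Some s \<Longrightarrow> \<exists>d'. \<beta> d' = Some s \<and> eqv (restr \<alpha> d) (restr \<beta> d')"
proof (induction arbitrary: d rule: eqv.induct)
  case (eqv_leaf \<phi>)
  then have "d = []" "s = Fm \<phi>" by (auto simp: leaf_def split: if_splits)
  moreover have "leaf \<phi> [] = Some (Fm \<phi>)" by (simp add: leaf_def)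
  ultimately show ?case using eqv.eqv_leaf by (intro exI[of _ "[]"]) auto
next
  case (eqv_app \<alpha>\<^sub>1 \<beta>\<^sub>1 \<alpha>\<^sub>2 \<beta>\<^sub>2 \<phi>)
  from eqv_app.prems show ?case
  proof (cases rule: app_SomeE)
    case 1
    then show ?thesis using eqv_app.hyps by (auto intro!: exI[of _ "[]"] eqv.eqv_app)
  next
    case (2 e)
    then show ?thesis using eqv_app.IH(1) by (metis app_Cons restr_app_1)
  next
    case (3 e)
    then show ?thesis using eqv_app.IH(2)
      by (metis app_Cons restr_app_2 numeral_One num.distinct(1) numeral_eq_iff)
  qed
next
  case (eqv_star as n bs als bes)
  obtain i e where i: "i < length as" "d = as ! i @ e" "(als ! i) e = Some s"
    using star_Some_at eqv_star.hyps(1,3,5) eqv_star.prems by metis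
  then obtain e' where "(bes ! i) e' = Some s" "eqv (restr (als ! i) e) (restr (bes ! i) e')"
    using eqv_star.IH eqv_star.hyps(1) by blast
  with i eqv_star.hyps show ?case
    by (auto simp: star_at restr_star intro!: exI[of _ "bs ! i @ e'"])
qed auto

lemma curv_blueprints: "curv m \<alpha> \<beta> \<Longrightarrow> blueprint \<alpha> \<and> blueprint \<beta>"
proof (induction rule: curv.induct)
  case (curv_base as gs b)
  then show ?case
    by (auto simp: pw_incomp_snoc intro!: blueprint_star dest: in_set_takeD)
qed (auto simp: blueprint_app intro!: blueprint_star)

lemma map_le_app: "u \<subseteq>\<^sub>m u' \<Longrightarrow> v \<subseteq>\<^sub>m v' \<Longrightarrow> app \<phi> u v \<subseteq>\<^sub>m app \<phi> u' v'"
  by (auto simp: map_le_def app_def domIff split: list.splits)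

lemma curv_map_le: "curv m \<alpha> \<beta> \<Longrightarrow> \<alpha> \<subseteq>\<^sub>m \<beta>"
proof (induction rule: curv.induct)
  case (curv_base as gs b)
  have as: "pw_incomp as" "length (take m gs) = length as"
    using curv_base.hyps by (simp_all add: pw_incomp_snoc)
  show ?case unfolding map_le_def
  proof
    fix d assume "d \<in> dom (star as (take m gs))"
    then obtain s where "star as (take m gs) d = Some s" by blast
    then obtain i e where i: "i < length as" "d = as ! i @ e"
      using star_Some_at[OF as] by metis
    then show "star as (take m gs) d = star (as @ [b]) gs d"
      using star_at[OF as i(1)] star_at[OF curv_base.hyps(4), of gs i e] curv_base.hyps(1,2)
      by (simp add: nth_append)
  qed
next
  case (curv_star as als bs bes c \<gamma>)
  then show ?case by (auto simp: star_snoc map_le_def graft_def)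
qed (auto simp: map_le_app)

lemma curv_restr: "curv m \<alpha> \<beta> \<Longrightarrow> \<alpha> d = Some s \<Longrightarrow> (curv m)\<^sup>=\<^sup>= (restr \<alpha> d) (restr \<beta> d)"
proof (induction arbitrary: d rule: curv.induct)
  case (curv_base as gs b)
  have as: "pw_incomp as" "length (take m gs) = length as"
    using curv_base.hyps by (simp_all add: pw_incomp_snoc)
  obtain i e where i: "i < length as" "d = as ! i @ e"
    using star_Some_at[OF as curv_base.prems] by metis
  then show ?case
    using restr_star[OF as i(1)] restr_star[OF curv_base.hyps(4), of gs i e] curv_base.hyps(1,2)
    by (simp add: nth_append)
next
  case (curv_app1 \<alpha> \<beta> \<gamma> \<phi>)
  from curv_app1.prems show ?case
    by (cases rule: app_SomeE) (auto simp: curv.curv_app1 curv_app1.hyps dest: curv_app1.IH)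
next
  case (curv_app2 \<alpha> \<beta> \<gamma> \<phi>)
  from curv_app2.prems show ?case
    by (cases rule: app_SomeE) (auto simp: curv.curv_app2 curv_app2.hyps dest: curv_app2.IH)
next
  case (curv_star as als bs bes c \<gamma>)
  note snoc = star_snoc[OF curv_star.hyps(6), of als \<gamma>] star_snoc[OF curv_star.hyps(7), of bes \<gamma>]
  show ?case
  proof (cases "prefix c d")
    case True
    then show ?thesis using curv_star.hyps(2,3) snoc by (auto simp: prefix_def)
  next
    case False
    then have "star as als d = Some s"
      using curv_star.prems curv_star.hyps(2) snoc by (simp add: graft_outside)
    moreover from this have "c \<parallel> d"
      using rooted_in_parallel[OF rooted_in_star curv_star.hyps(6)] by blast
    ultimately show ?thesis
      using curv_star.IH curv_star.hyps(2,3) snoc by (simp add: restr_graft_parallel)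
  qed
qed

section \<open>Where a contraction can happen\<close>

lemma contractible_app_cases:
  assumes "contractible (app \<phi> u v) a b"
  obtains (root_1) e where "a = []" "u e = Some (At \<phi>)" "contract (app \<phi> u v) a b = restr u e"
  | (root_2) e where "a = []" "v e = Some (At \<phi>)" "contract (app \<phi> u v) a b = restr v e"
  | (left) a' b' where "contractible u a' b'" "contract (app \<phi> u v) a b = app \<phi> (contract u a' b') v"
  | (right) a' b' where "contractible v a' b'" "contract (app \<phi> u v) a b = app \<phi> u (contract v a' b')"
proof (cases a)
  case Nil
  with assms obtain i e where "b = i # e" "app \<phi> u v (i # e) = Some (At \<phi>)"
    by (cases b) (auto simp: contractible_def)
  with Nil show thesis
    using root_1 root_2 by (auto simp: contract_Nil split: if_splits)
next
  case (Cons i a')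
  with assms obtain b' where b': "b = i # b'" "strict_prefix a' b'"
    by (cases b) (auto simp: contractible_def)
  moreover have "i = 1 \<or> i = 2" using assms Cons by (auto simp: contractible_def split: if_splits)
  ultimately show thesis
  proof (elim disjE)
    assume "i = 1"
    with assms Cons b' have "contractible u a' b'"
      using contractible_append[of "app \<phi> u v" "[1]" a' b'] by simp
    with \<open>i = 1\<close> Cons b' show thesis by (intro left) (simp_all add: contract_app_1)
  next
    assume "i = 2"
    with assms Cons b' have "contractible v a' b'"
      using contractible_append[of "app \<phi> u v" "[2]" a' b'] by simp
    with \<open>i = 2\<close> Cons b' show thesis by (intro right) (simp_all add: contract_app_2)
  qed
qed

lemma contractible_star_cases:
  assumes "pw_incomp as" "length als = length as" "contractible (star as als) a b"
  obtains i a' b' where "i < length as" "contractible (als ! i) a' b'"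
    "contract (star as als) a b = star as (als[i := contract (als ! i) a' b'])"
proof -
  obtain s where "star as als a = Some s" using assms(3) by (auto simp: contractible_def)
  then obtain i a' where i: "i < length as" "a = as ! i @ a'"
    using star_Some_at[OF assms(1,2)] by metis
  with assms(3) obtain b' where b': "b = as ! i @ b'" "contractible (restr (star as als) (as ! i)) a' b'"
    by (auto elim: contractible_appendE)
  have "restr (star as als) (as ! i) = als ! i"
    using restr_star[OF assms(1,2) i(1), of "[]"] by simp
  with i b' show thesis
    using that star_update[OF assms(1,2) i(1)] by (simp add: contract_append)
qed

lemma contractible_graft_cases:
  assumes "\<forall>d\<in>dom \<pi>. c \<parallel> d" "contractible (graft \<pi> c \<gamma>) a b"
  obtains (inside) a' b' where "contractible \<gamma> a' b'"
    "contract (graft \<pi> c \<gamma>) a b = graft \<pi> c (contract \<gamma> a' b')"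
  | (outside) "c \<parallel> a" "c \<parallel> b" "contractible \<pi> a b"
    "contract (graft \<pi> c \<gamma>) a b = graft (contract \<pi> a b) c \<gamma>"
proof (cases "prefix c a")
  case True
  then obtain a' where a': "a = c @ a'" by (auto simp: prefix_def)
  with assms(2) obtain b' where "b = c @ b'" "contractible \<gamma> a' b'"
    by (auto elim: contractible_appendE)
  with a' show thesis using inside by (simp add: contract_append)
next
  case False
  then have "a \<in> dom \<pi>" using assms(2) by (auto simp: contractible_def graft_outside domIff)
  then have ca: "c \<parallel> a" using assms(1) by blast
  moreover have cb: "c \<parallel> b"
    using ca assms(2) parallel_prefix_trans by (auto simp: contractible_def strict_prefix_def)
  moreover have "contractible \<pi> a b"
    using ca cb assms(2) by (auto simp: contractible_def graft_outside parallelD1 domIff)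
  ultimately show thesis
    using outside by (simp add: graft_contract_parallel)
qed

section \<open>Contractions commute with \<open>\<equiv>\<close>\<close>

lemma eqv_app_contract:
  assumes "eqv \<alpha>\<^sub>1 \<beta>\<^sub>1" "eqv \<alpha>\<^sub>2 \<beta>\<^sub>2" "\<alpha>\<^sub>1 \<noteq> Map.empty" "\<alpha>\<^sub>2 \<noteq> Map.empty"
    "\<beta>\<^sub>1 \<noteq> Map.empty" "\<beta>\<^sub>2 \<noteq> Map.empty"
    and IH\<^sub>1: "\<And>a b. contractible \<alpha>\<^sub>1 a b \<Longrightarrow> \<exists>z. eqv (contract \<alpha>\<^sub>1 a b) z \<and> up z \<beta>\<^sub>1"
    and IH\<^sub>2: "\<And>a b. contractible \<alpha>\<^sub>2 a b \<Longrightarrow> \<exists>z. eqv (contract \<alpha>\<^sub>2 a b) z \<and> up z \<beta>\<^sub>2"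
    and "contractible (app \<phi> \<alpha>\<^sub>1 \<alpha>\<^sub>2) a b"
  shows "\<exists>z. eqv (contract (app \<phi> \<alpha>\<^sub>1 \<alpha>\<^sub>2) a b) z \<and> up z (app \<phi> \<beta>\<^sub>1 \<beta>\<^sub>2)"
proof -
  have bp: "blueprint \<beta>\<^sub>1" "blueprint \<beta>\<^sub>2"
    using assms(1,2) eqv_blueprints by blast+
  then have bp_app: "blueprint (app \<phi> \<beta>\<^sub>1 \<beta>\<^sub>2)"
    using assms(5,6) by (simp add: blueprint_app)
  from assms(9) show ?thesis
  proof (cases rule: contractible_app_cases)
    case (root_1 e)
    then obtain e' where "\<beta>\<^sub>1 e' = Some (At \<phi>)" "eqv (restr \<alpha>\<^sub>1 e) (restr \<beta>\<^sub>1 e')"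
      using eqv_restr_match[OF assms(1)] by blast
    then show ?thesis using root_1(3) up_restr_app_1[OF bp_app] by auto
  next
    case (root_2 e)
    then obtain e' where "\<beta>\<^sub>2 e' = Some (At \<phi>)" "eqv (restr \<alpha>\<^sub>2 e) (restr \<beta>\<^sub>2 e')"
      using eqv_restr_match[OF assms(2)] by blast
    then show ?thesis using root_2(3) up_restr_app_2[OF bp_app] by auto
  next
    case (left a' b')
    then obtain z where z: "eqv (contract \<alpha>\<^sub>1 a' b') z" "up z \<beta>\<^sub>1" using IH\<^sub>1 by blast
    then have z_ne: "z \<noteq> Map.empty"
      using left(1) contract_nonempty eqv_empty_iff by blast
    have "eqv (app \<phi> (contract \<alpha>\<^sub>1 a' b') \<alpha>\<^sub>2) (app \<phi> z \<beta>\<^sub>2)"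
      using z assms z_ne contract_nonempty[OF left(1)] by (simp add: eqv.eqv_app)
    moreover have "up (app \<phi> z \<beta>\<^sub>2) (app \<phi> \<beta>\<^sub>1 \<beta>\<^sub>2)"
      by (rule up_app_1[OF z(2) assms(5) bp(2) assms(6)])
    ultimately show ?thesis using left(2) by auto
  next
    case (right a' b')
    then obtain z where z: "eqv (contract \<alpha>\<^sub>2 a' b') z" "up z \<beta>\<^sub>2" using IH\<^sub>2 by blast
    then have z_ne: "z \<noteq> Map.empty"
      using right(1) contract_nonempty eqv_empty_iff by blast
    have "eqv (app \<phi> \<alpha>\<^sub>1 (contract \<alpha>\<^sub>2 a' b')) (app \<phi> \<beta>\<^sub>1 z)"
      using z assms z_ne contract_nonempty[OF right(1)] by (simp add: eqv.eqv_app)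
    moreover have "up (app \<phi> \<beta>\<^sub>1 z) (app \<phi> \<beta>\<^sub>1 \<beta>\<^sub>2)"
      by (rule up_app_2[OF z(2) assms(6) bp(1) assms(5)])
    ultimately show ?thesis using right(2) by auto
  qed
qed

lemma eqv_contract:
  "eqv \<alpha> \<beta> \<Longrightarrow> contractible \<alpha> a b \<Longrightarrow> \<exists>z. eqv (contract \<alpha> a b) z \<and> up z \<beta>"
proof (induction arbitrary: a b rule: eqv.induct)
  case eqv_empty
  then show ?case by (simp add: contractible_def)
next
  case (eqv_leaf \<phi>)
  then show ?case by (auto simp: contractible_def leaf_def strict_prefix_def split: if_splits)
next
  case (eqv_app \<alpha>\<^sub>1 \<beta>\<^sub>1 \<alpha>\<^sub>2 \<beta>\<^sub>2 \<phi>)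
  then show ?case by (intro eqv_app_contract)
next
  case (eqv_star as n bs als bes)
  have eqv_i: "eqv (als ! j) (bes ! j)" if "j < n" for j
    using eqv_star.IH that by blast
  have as: "pw_incomp as" "length als = length as" using eqv_star.hyps by simp_all
  obtain i a' b' where i: "i < length as" "contractible (als ! i) a' b'"
    and contr: "contract (star as als) a b = star as (als[i := contract (als ! i) a' b'])"
    using contractible_star_cases[OF as eqv_star.prems] .
  define c where "c = contract (als ! i) a' b'"
  obtain z where z: "eqv c z" "up z (bes ! i)" using eqv_star.IH i eqv_star.hyps(1) c_def by blast
  have c_ne: "c \<noteq> Map.empty" unfolding c_def using i(2) by (rule contract_nonempty)
  have "eqv (star as (als[i := c])) (star bs (bes[i := z]))"
    using eqv_star.hyps eqv_i i(1) z(1) c_ne eqv_empty_iff[OF z(1)]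
    by (intro eqv.eqv_star[where n = n]) (auto simp: nth_list_update)
  moreover have "up (star bs (bes[i := z])) (star bs bes)"
  proof -
    have "blueprint (bes ! j)" if "j < n" for j using eqv_blueprints[OF eqv_i[OF that]] by simp
    then have "\<forall>x\<in>set bes. blueprint x" using eqv_star.hyps(4) by (auto simp: in_set_conv_nth)
    moreover have "als ! i \<noteq> Map.empty" using contractible_dom[OF i(2)] by auto
    then have "bes ! i \<noteq> Map.empty"
      using eqv_empty_iff[OF eqv_i] i(1) eqv_star.hyps(1) by simp
    ultimately show ?thesis
      using up_star_update[of bs bes i z "bes ! i"] eqv_star.hyps i(1) z(2) by simp
  qed
  ultimately show ?case unfolding contr c_def[symmetric] by blast
qed

section \<open>Contractions commute with \<open>\<curvearrowleft>\<^sub>1\<close>\<close>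

lemma curv_nonempty: "curv m \<alpha> \<beta> \<Longrightarrow> \<alpha> \<noteq> Map.empty \<Longrightarrow> \<beta> \<noteq> Map.empty"
  by (metis curv_map_le map_le_antisym map_le_empty)

lemma curv_reflcl_app_1:
  assumes "(curv m)\<^sup>=\<^sup>= \<alpha> \<beta>" "\<alpha> \<noteq> Map.empty" "blueprint \<gamma>" "\<gamma> \<noteq> Map.empty"
  shows "(curv m)\<^sup>=\<^sup>= (app \<phi> \<alpha> \<gamma>) (app \<phi> \<beta> \<gamma>)"
  using assms curv_nonempty by (auto intro: curv.curv_app1)

lemma curv_reflcl_app_2:
  assumes "(curv m)\<^sup>=\<^sup>= \<alpha> \<beta>" "\<alpha> \<noteq> Map.empty" "blueprint \<gamma>" "\<gamma> \<noteq> Map.empty"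
  shows "(curv m)\<^sup>=\<^sup>= (app \<phi> \<gamma> \<alpha>) (app \<phi> \<gamma> \<beta>)"
  using assms curv_nonempty by (auto intro: curv.curv_app2)

lemma up_rooted_in: "up \<alpha> \<beta> \<Longrightarrow> rooted_in as \<beta> \<Longrightarrow> rooted_in as \<alpha>"
  unfolding rooted_in_def by (meson up_dom prefix_order.order_trans)

lemma curv_graft_parallel:
  assumes "curv m \<alpha> \<beta>" "rooted_in as \<alpha>" "rooted_in bs \<beta>"
    and "pw_incomp (as @ [c])" "pw_incomp (bs @ [c])"
    and "\<forall>a\<in>set (as @ [c]). is_addr a" "\<forall>b\<in>set (bs @ [c]). is_addr b"
    and "blueprint \<gamma>" "\<gamma> \<noteq> Map.empty"
  shows "curv m (graft \<alpha> c \<gamma>) (graft \<beta> c \<gamma>)"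
proof -
  have star: "star as (map (restr \<alpha>) as) = \<alpha>" "star bs (map (restr \<beta>) bs) = \<beta>"
    using assms(2,3) by (simp_all add: star_restr_eq)
  have "blueprint \<alpha>" "blueprint \<beta>" using curv_blueprints[OF assms(1)] by simp_all
  then have "curv m (star (as @ [c]) (map (restr \<alpha>) as @ [\<gamma>])) (star (bs @ [c]) (map (restr \<beta>) bs @ [\<gamma>]))"
    using assms star by (intro curv.curv_star) (auto simp: blueprint_restr)
  then show ?thesis using assms(4,5) star star_snoc by (metis length_map)
qed

(* The only place where m = 1 matters: the contraction can only hit the single
   copy g\<^sub>0, and transporting it along g\<^sub>0 \<equiv> g\<^sub>1 gives the new last copy. *)
lemma curv_base_contract:
  assumes "pw_incomp [p, q]" "is_addr p" "is_addr q" "blueprint g\<^sub>0" "eqv g\<^sub>0 g\<^sub>1" "g\<^sub>1 \<noteq> Map.empty"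
    and "contractible (star [p] [g\<^sub>0]) a b"
  shows "\<exists>z. (curv 1)\<^sup>=\<^sup>= (contract (star [p] [g\<^sub>0]) a b) z \<and> up z (star [p, q] [g\<^sub>0, g\<^sub>1])"
proof -
  have pw: "pw_incomp [p]" "pw_incomp ([p] @ [q])"
    using assms(1) pw_incomp_snoc[of "[p]" q] by simp_all
  obtain i a' b' where i: "i < length [p]" "contractible ([g\<^sub>0] ! i) a' b'"
    "contract (star [p] [g\<^sub>0]) a b = star [p] ([g\<^sub>0][i := contract ([g\<^sub>0] ! i) a' b'])"
    using contractible_star_cases[OF pw(1) _ assms(7)] by auto
  then have contr: "contractible g\<^sub>0 a' b'"
    "contract (star [p] [g\<^sub>0]) a b = star [p] [contract g\<^sub>0 a' b']"
    by simp_all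
  define c where "c = contract g\<^sub>0 a' b'"
  obtain h where h: "eqv c h" "up h g\<^sub>1" using eqv_contract[OF assms(5) contr(1)] c_def by blast
  have "blueprint c" "blueprint h" using h(1) eqv_blueprints by blast+
  have "h \<noteq> Map.empty" using h(1) contr(1) c_def contract_nonempty eqv_empty_iff by blast
  have "curv 1 (star [p] (take 1 [c, h])) (star ([p] @ [q]) [c, h])"
    using pw(2) assms(2,3) h(1) \<open>blueprint c\<close> \<open>blueprint h\<close> \<open>h \<noteq> Map.empty\<close>
    by (intro curv.curv_base) (auto dest: eqv_empty_iff)
  moreover have "up (star [p, q] [c, h]) (star [p, q] [g\<^sub>0, h])"
    using up_star_update[OF assms(1), of "[g\<^sub>0, h]" 0 c g\<^sub>0] assms(2-4) contr(1) c_def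
      \<open>blueprint h\<close> up_contract[OF assms(4) contr(1)] contractible_dom[OF contr(1)]
    by auto
  moreover have "up (star [p, q] [g\<^sub>0, h]) (star [p, q] [g\<^sub>0, g\<^sub>1])"
    using up_star_update[OF assms(1), of "[g\<^sub>0, g\<^sub>1]" 1 h g\<^sub>1] assms(2-6) h(2)
      eqv_blueprints[OF assms(5)] by (auto simp: One_nat_def)
  ultimately show ?thesis
    unfolding contr(2) c_def[symmetric]
    by (intro exI[of _ "star [p, q] [c, h]"]) (auto simp: One_nat_def intro: up.up_trans)
qed

lemma curv_app_1_contract:
  assumes "curv m \<alpha> \<beta>" "\<alpha> \<noteq> Map.empty" "blueprint \<gamma>" "\<gamma> \<noteq> Map.empty"
    and IH: "\<And>a b. contractible \<alpha> a b \<Longrightarrow> \<exists>z. (curv m)\<^sup>=\<^sup>= (contract \<alpha> a b) z \<and> up z \<beta>"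
    and "contractible (app \<phi> \<alpha> \<gamma>) a b"
  shows "\<exists>z. (curv m)\<^sup>=\<^sup>= (contract (app \<phi> \<alpha> \<gamma>) a b) z \<and> up z (app \<phi> \<beta> \<gamma>)"
proof -
  have \<beta>: "blueprint \<beta>" "\<beta> \<noteq> Map.empty"
    using assms(1,2) curv_blueprints curv_nonempty by blast+
  then have bp: "blueprint (app \<phi> \<beta> \<gamma>)" using assms(3,4) by (simp add: blueprint_app)
  from assms(6) show ?thesis
  proof (cases rule: contractible_app_cases)
    case (root_1 e)
    then have "\<beta> e = Some (At \<phi>)" using curv_map_le[OF assms(1)] by (metis domI map_le_def)
    then show ?thesis
      using root_1 curv_restr[OF assms(1) root_1(2)] up_restr_app_1[OF bp] by auto
  next
    case (root_2 e)
    then show ?thesis using up_restr_app_2[OF bp] by auto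
  next
    case (left a' b')
    then obtain z where z: "(curv m)\<^sup>=\<^sup>= (contract \<alpha> a' b') z" "up z \<beta>" using IH by blast
    show ?thesis
      unfolding left(2)
      using curv_reflcl_app_1[OF z(1) contract_nonempty[OF left(1)] assms(3,4), of \<phi>]
        up_app_1[OF z(2) \<beta>(2) assms(3,4), of \<phi>] by blast
  next
    case (right a' b')
    have "blueprint (contract \<gamma> a' b')" "contract \<gamma> a' b' \<noteq> Map.empty"
      using right(1) assms(3) by (simp_all add: blueprint_contract contract_nonempty)
    then have "curv m (app \<phi> \<alpha> (contract \<gamma> a' b')) (app \<phi> \<beta> (contract \<gamma> a' b'))"
      using assms(1,2) \<beta>(2) by (simp add: curv.curv_app1)
    moreover have "up (app \<phi> \<beta> (contract \<gamma> a' b')) (app \<phi> \<beta> \<gamma>)"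
      using up_contract[OF assms(3) right(1)] assms(4) \<beta> by (rule up_app_2)
    ultimately show ?thesis using right(2) by auto
  qed
qed

lemma curv_app_2_contract:
  assumes "curv m \<alpha> \<beta>" "\<alpha> \<noteq> Map.empty" "blueprint \<gamma>" "\<gamma> \<noteq> Map.empty"
    and IH: "\<And>a b. contractible \<alpha> a b \<Longrightarrow> \<exists>z. (curv m)\<^sup>=\<^sup>= (contract \<alpha> a b) z \<and> up z \<beta>"
    and "contractible (app \<phi> \<gamma> \<alpha>) a b"
  shows "\<exists>z. (curv m)\<^sup>=\<^sup>= (contract (app \<phi> \<gamma> \<alpha>) a b) z \<and> up z (app \<phi> \<gamma> \<beta>)"
proof -
  have \<beta>: "blueprint \<beta>" "\<beta> \<noteq> Map.empty"
    using assms(1,2) curv_blueprints curv_nonempty by blast+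
  then have bp: "blueprint (app \<phi> \<gamma> \<beta>)" using assms(3,4) by (simp add: blueprint_app)
  from assms(6) show ?thesis
  proof (cases rule: contractible_app_cases)
    case (root_1 e)
    then show ?thesis using up_restr_app_1[OF bp] by auto
  next
    case (root_2 e)
    then have "\<beta> e = Some (At \<phi>)" using curv_map_le[OF assms(1)] by (metis domI map_le_def)
    then show ?thesis
      using root_2 curv_restr[OF assms(1) root_2(2)] up_restr_app_2[OF bp] by auto
  next
    case (left a' b')
    have "blueprint (contract \<gamma> a' b')" "contract \<gamma> a' b' \<noteq> Map.empty"
      using left(1) assms(3) by (simp_all add: blueprint_contract contract_nonempty)
    then have "curv m (app \<phi> (contract \<gamma> a' b') \<alpha>) (app \<phi> (contract \<gamma> a' b') \<beta>)"
      using assms(1,2) \<beta>(2) by (simp add: curv.curv_app2)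
    moreover have "up (app \<phi> (contract \<gamma> a' b') \<beta>) (app \<phi> \<gamma> \<beta>)"
      using up_contract[OF assms(3) left(1)] assms(4) \<beta> by (rule up_app_1)
    ultimately show ?thesis using left(2) by auto
  next
    case (right a' b')
    then obtain z where z: "(curv m)\<^sup>=\<^sup>= (contract \<alpha> a' b') z" "up z \<beta>" using IH by blast
    show ?thesis
      unfolding right(2)
      using curv_reflcl_app_2[OF z(1) contract_nonempty[OF right(1)] assms(3,4), of \<phi>]
        up_app_2[OF z(2) \<beta>(2) assms(3,4), of \<phi>] by blast
  qed
qed

lemma curv_star_contract:
  assumes "curv m (star as als) (star bs bes)" "length as = length als" "length bs = length bes"
    and "pw_incomp (as @ [c])" "pw_incomp (bs @ [c])"
    and "\<forall>a\<in>set (as @ [c]). is_addr a" "\<forall>b\<in>set (bs @ [c]). is_addr b"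
    and "blueprint \<gamma>" "\<gamma> \<noteq> Map.empty"
    and IH: "\<And>a b. contractible (star as als) a b \<Longrightarrow>
      \<exists>z. (curv m)\<^sup>=\<^sup>= (contract (star as als) a b) z \<and> up z (star bs bes)"
    and "contractible (star (as @ [c]) (als @ [\<gamma>])) a b"
  shows "\<exists>z. (curv m)\<^sup>=\<^sup>= (contract (star (as @ [c]) (als @ [\<gamma>])) a b) z \<and>
    up z (star (bs @ [c]) (bes @ [\<gamma>]))"
proof -
  define X Y where "X = star as als" and "Y = star bs bes"
  have snoc: "star (as @ [c]) (als @ [\<delta>]) = graft X c \<delta>" "star (bs @ [c]) (bes @ [\<delta>]) = graft Y c \<delta>"
    for \<delta> unfolding X_def Y_def
    using star_snoc[OF assms(4), of als \<delta>] star_snoc[OF assms(5), of bes \<delta>] assms(2,3) by simp_all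
  have X: "blueprint X" "rooted_in as X" and Y: "blueprint Y" "rooted_in bs Y"
    using curv_blueprints[OF assms(1)] rooted_in_star X_def Y_def by auto
  have "is_addr c" using assms(6) by simp
  from rooted_in_parallel[OF X(2) assms(4)] assms(11)[unfolded snoc] show ?thesis
  proof (cases rule: contractible_graft_cases)
    case (inside a' b')
    have "curv m (graft X c (contract \<gamma> a' b')) (graft Y c (contract \<gamma> a' b'))"
      using curv_graft_parallel[OF assms(1)[folded X_def Y_def] X(2) Y(2) assms(4-7)] inside(1) assms(8)
      by (simp add: blueprint_contract contract_nonempty)
    moreover have "up (graft Y c (contract \<gamma> a' b')) (graft Y c \<gamma>)"
      using up_contract[OF assms(8) inside(1)] assms(9) Y(1) \<open>is_addr c\<close> by (rule up_graft_inside)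
    ultimately show ?thesis unfolding snoc inside(2) by blast
  next
    case outside
    obtain z where z: "(curv m)\<^sup>=\<^sup>= (contract X a b) z" "up z Y"
      using IH outside(3) X_def Y_def by blast
    have "(curv m)\<^sup>=\<^sup>= (graft (contract X a b) c \<gamma>) (graft z c \<gamma>)"
    proof (cases "contract X a b = z")
      case False
      then have "curv m (contract X a b) z" using z(1) by simp
      then show ?thesis
        using curv_graft_parallel[OF _ up_rooted_in[OF up_contract[OF X(1) outside(3)] X(2)]
            up_rooted_in[OF z(2) Y(2)] assms(4-9)] by simp
    qed simp
    moreover have "up (graft z c \<gamma>) (graft Y c \<gamma>)"
      using z(2) rooted_in_parallel[OF Y(2) assms(5)] \<open>is_addr c\<close> assms(8,9)
      by (rule up_graft_parallel)
    ultimately show ?thesis unfolding snoc outside(4) by blast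
  qed
qed

lemma curv_contract:
  "curv 1 \<alpha> \<beta> \<Longrightarrow> contractible \<alpha> a b \<Longrightarrow> \<exists>z. (curv 1)\<^sup>=\<^sup>= (contract \<alpha> a b) z \<and> up z \<beta>"
proof (induction arbitrary: a b rule: curv.induct)
  case (curv_base as gs q)
  obtain p where "as = [p]" using curv_base.hyps(1) by (cases as) (auto simp: One_nat_def)
  moreover obtain g\<^sub>0 g\<^sub>1 where "gs = [g\<^sub>0, g\<^sub>1]"
    using curv_base.hyps(2) by (cases gs rule: remdups_adj.cases) (auto simp: One_nat_def)
  moreover have "g\<^sub>1 \<noteq> Map.empty" using curv_base.hyps(7) \<open>gs = [g\<^sub>0, g\<^sub>1]\<close> eqv.eqv_empty
    by (auto simp: One_nat_def)
  ultimately show ?case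
    using curv_base.hyps(3-6) curv_base.prems curv_base_contract[of p q g\<^sub>0 g\<^sub>1 a b]
    by (auto simp: One_nat_def)
next
  case (curv_app1 \<alpha> \<beta> \<gamma> \<phi>)
  then show ?case by (intro curv_app_1_contract)
next
  case (curv_app2 \<alpha> \<beta> \<gamma> \<phi>)
  then show ?case by (intro curv_app_2_contract)
next
  case (curv_star as als bs bes c \<gamma>)
  then show ?case by (intro curv_star_contract)
qed

lemma sq_step_contract:
  assumes "sq_step 1 \<beta> \<beta>'" "contractible \<beta> a b"
  shows "\<exists>z. (sq_step 1)\<^sup>=\<^sup>= (contract \<beta> a b) z \<and> up z \<beta>'"
  using assms eqv_contract[of \<beta> \<beta>' a b] curv_contract[of \<beta> \<beta>' a b]
  unfolding sq_step_def by blast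

lemma up_sq_step_commute:
  "up \<alpha> \<beta> \<Longrightarrow> sq_step 1 \<beta> \<beta>' \<Longrightarrow> \<exists>\<alpha>'. (sq_step 1)\<^sup>=\<^sup>= \<alpha> \<alpha>' \<and> up \<alpha>' \<beta>'"
proof (induction arbitrary: \<beta>' rule: up.induct)
  case (up_refl \<beta>)
  then have "blueprint \<beta>'" using eqv_blueprints curv_blueprints unfolding sq_step_def by blast
  then show ?case using up_refl.prems by (blast intro: up.up_refl)
next
  case (up_step \<beta> a b)
  then have "contractible \<beta> a b" by (simp add: contractible_def)
  then show ?case using sq_step_contract[OF up_step.prems] by (simp add: contract_def)
next
  case (up_trans \<alpha> \<beta> \<gamma>)
  then obtain \<beta>'' where \<beta>'': "(sq_step 1)\<^sup>=\<^sup>= \<beta> \<beta>''" "up \<beta>'' \<beta>'" by blast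
  then show ?case using up_trans.IH(1) up_trans.hyps(1) by (blast intro: up.up_trans)
qed

lemma up_sq_commute:
  assumes "sq 1 \<beta> \<beta>'" "up \<alpha> \<beta>"
  shows "\<exists>\<alpha>'. sq 1 \<alpha> \<alpha>' \<and> up \<alpha>' \<beta>'"
  using assms(1)[unfolded sq_eq_rtranclp]
proof (induction rule: rtranclp_induct)
  case base
  then show ?case using assms(2) by (auto simp: sq_def)
next
  case (step \<gamma> \<gamma>')
  then obtain \<alpha>\<^sub>1 where \<alpha>\<^sub>1: "sq 1 \<alpha> \<alpha>\<^sub>1" "up \<alpha>\<^sub>1 \<gamma>" by blast
  then obtain \<alpha>\<^sub>2 where \<alpha>\<^sub>2: "(sq_step 1)\<^sup>=\<^sup>= \<alpha>\<^sub>1 \<alpha>\<^sub>2" "up \<alpha>\<^sub>2 \<gamma>'"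
    using up_sq_step_commute step.hyps(2) by blast
  then have "sq 1 \<alpha> \<alpha>\<^sub>2"
    using \<alpha>\<^sub>1(1) unfolding sq_eq_rtranclp
    by (cases "\<alpha>\<^sub>1 = \<alpha>\<^sub>2") (auto intro: rtranclp.rtrancl_into_rtrancl)
  with \<alpha>\<^sub>2(2) show ?case by blast
qed

theorem lemma4p10:
  fixes \<alpha> \<beta> \<beta>' :: "'f ptree"
  assumes "blueprint \<alpha>" and "blueprint \<beta>" and "blueprint \<beta>'"
    and "up \<alpha> \<beta>" and "sq 1 \<beta> \<beta>'"
  shows "\<exists>\<alpha>'. blueprint \<alpha>' \<and> sq 1 \<alpha> \<alpha>' \<and> up \<alpha>' \<beta>'"
proof -
  obtain \<alpha>' where "sq 1 \<alpha> \<alpha>'" "up \<alpha>' \<beta>'" using up_sq_commute[OF assms(5,4)] by blast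
  moreover from \<open>up \<alpha>' \<beta>'\<close> have "blueprint \<alpha>'" using up_blueprints by blast
  ultimately show ?thesis by blast
qed

end
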